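(* Let $D$ be the derivation of the polynomial ring $\mathbb{Q}[\alpha,\beta][a,b,u_1,u_2,u_3,u_4]$ that is $\mathbb{Q}[\alpha,\beta]$-linear (so $D(\alpha)=D(\beta)=0$), satisfies the Leibniz rule $D(fg)=D(f)g+fD(g)$, and is given on generators by $$D(a)=\alpha a u_4,\quad D(b)=\beta b u_3,\quad D(u_4)=u_1u_2,\quad D(u_3)=u_1u_2,\quad D(u_1)=u_1u_3,\quad D(u_2)=u_2u_4.$$ Then for every $n\geq0$, $D^n(ab)=ab\,P_n(u_1,u_2,u_3,u_4\mid\alpha,\beta)$.
   Context: For $\sigma=\sigma_1\cdots\sigma_m\in\mathfrak S_m$: ${\rm LRmax}(\sigma)$ is the number of $i$ with $\sigma_j<\sigma_i$ for all $j<i$; ${\rm RLmax}(\sigma)$ is the number of $i$ with $\sigma_j<\sigma_i$ for all $j>i$. With the convention $\sigma_0=\sigma_{m+1}=0$: ${\rm W}(\sigma)$ is the number of $i\in[m]$ with $\sigma_{i-1}<\sigma_i>\sigma_{i+1}$; ${\rm V}(\sigma)$ is the number of $i$ with $1<i<m$ and $\sigma_{i-1}>\sigma_i<\sigma_{i+1}$; ${\rm rdd}(\sigma)$ is the number of $i$ with $1<i\le m$ and $\sigma_{i-1}>\sigma_i>\sigma_{i+1}$; ${\rm lda}(\sigma)$ is the number of $i$ with $1\le i<m$ and $\sigma_{i-1}<\sigma_i<\sigma_{i+1}$. Define $$P_n(u_1,u_2,u_3,u_4\mid\alpha,\beta)=\sum_{\sigma\in\mathfrak S_{n+1}}u_1^{{\rm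 V}(\sigma)}u_2^{{\rm W}(\sigma)-1}u_3^{{\rm rdd}(\sigma)}u_4^{{\rm lda}(\sigma)}\alpha^{{\rm LRmax}(\sigma)-1}\beta^{{\rm RLmax}(\sigma)-1}.$$ *)

theory Defs
  imports "HOL-Library.Poly_Mapping" "HOL-Combinatorics.Multiset_Permutations"
begin

datatype var = Alpha | Beta | A | B | U1 | U2 | U3 | U4

text \<open>Polynomials over Q in these variables: finitely supported maps from monomials
  (exponent vectors) to coefficients; this is a commutative ring with the usual product.\<close>
type_synonym poly = "(var \<Rightarrow>\<^sub>0 nat) \<Rightarrow>\<^sub>0 rat"

definition Var :: "var \<Rightarrow> poly" where
  "Var x = Poly_Mapping.single (Poly_Mapping.single x 1) 1"

definition Const :: "rat \<Rightarrow> poly" where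
  "Const c = Poly_Mapping.single 0 c"

text \<open>Permutations in S_m are lists (sigma_1,...,sigma_m); value at position i with the
  convention sigma_0 = sigma_(m+1) = 0.\<close>
definition sv :: "nat list \<Rightarrow> nat \<Rightarrow> nat" where
  "sv s i = (if 1 \<le> i \<and> i \<le> length s then s ! (i - 1) else 0)"

definition LRmax :: "nat list \<Rightarrow> nat" where
  "LRmax s = card {i \<in> {1..length s}. \<forall>j. 1 \<le> j \<and> j < i \<longrightarrow> sv s j < sv s i}"

definition RLmax :: "nat list \<Rightarrow> nat" where
  "RLmax s = card {i \<in> {1..length s}. \<forall>j. i < j \<and> j \<le> length s \<longrightarrow> sv s j < sv s i}"

definition Wst :: "nat list \<Rightarrow> nat" where
  "Wst s = card {i \<in> {1..length s}. sv s (i - 1) < sv s i \<and> sv s i > sv s (i + 1)}"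

definition Vst :: "nat list \<Rightarrow> nat" where
  "Vst s = card {i. 1 < i \<and> i < length s \<and> sv s (i - 1) > sv s i \<and> sv s i < sv s (i + 1)}"

definition rdd :: "nat list \<Rightarrow> nat" where
  "rdd s = card {i. 1 < i \<and> i \<le> length s \<and> sv s (i - 1) > sv s i \<and> sv s i > sv s (i + 1)}"

definition lda :: "nat list \<Rightarrow> nat" where
  "lda s = card {i. 1 \<le> i \<and> i < length s \<and> sv s (i - 1) < sv s i \<and> sv s i < sv s (i + 1)}"

definition Pn :: "nat \<Rightarrow> poly" where
  "Pn n = (\<Sum>s\<in>permutations_of_set {1..n+1}.
      Var U1 ^ Vst s * Var U2 ^ (Wst s - 1) * Var U3 ^ rdd s * Var U4 ^ lda s
      * Var Alpha ^ (LRmax s - 1) * Var Beta ^ (RLmax s - 1))"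

end

theory Submission imports Defs begin

text \<open>
  Give a permutation \<sigma> the monomial weight
  \<alpha>^(LRmax \<sigma> - 1) \<beta>^(RLmax \<sigma> - 1) (u1 u2)^V(\<sigma>) u3^rdd(\<sigma>) u4^lda(\<sigma>);
  this is its term in P_n, because peaks and valleys alternate along 0 \<sigma> 0, so that W = V + 1.
  Every permutation of a set arises exactly once from a permutation of the other entries by
  inserting the smallest entry x into one of its gaps, and the weights of these insertions add up
  to the derivative of the weight (after multiplying by ab). At the front, x is a new
  left-to-right maximum and the old first entry starts a double ascent (D a = \<alpha> a u4); at the
  end, x is a new right-to-left maximum and the old last entry ends a double descent
  (D b = \<beta> b u3). In an inner gap x becomes a valley and the smaller of its two neighbours changes
  type: a double ascent or double descent becomes a peak (D u4 = D u3 = u1 u2), a valley becomes a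
  double descent or double ascent (D u1 = u1 u3, D u2 = u2 u4).
\<close>

fun count_triples :: "(nat \<Rightarrow> nat \<Rightarrow> nat \<Rightarrow> bool) \<Rightarrow> nat list \<Rightarrow> nat" where
  "count_triples P (a # b # c # r) = of_bool (P a b c) + count_triples P (b # c # r)"
| "count_triples P _ = 0"

lemma card_less_Suc_split:
  "card {i. i < Suc n \<and> Q i} = of_bool (Q 0) + card {i. i < n \<and> Q (Suc i)}"
proof -
  have card_eq_sum: "card {i. i < m \<and> R i} = (\<Sum>i<m. of_bool (R i))" for m :: nat and R
    by (subst sum_of_bool_eq) (auto intro: arg_cong[where f = card])
  show ?thesis
    unfolding card_eq_sum sum.lessThan_Suc_shift ..
qed

lemma card_shift_from_1: "card {i \<in> {1..n}. Q i} = card {i. i < n \<and> Q (Suc i)}"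
proof -
  have "{i \<in> {1..n}. Q i} = Suc ` {i. i < n \<and> Q (Suc i)}"
    by (auto simp: image_iff gr0_conv_Suc Suc_le_eq)
  then show ?thesis
    by (simp add: card_image)
qed

lemma sum_of_bool_mult:
  "finite I \<Longrightarrow> (\<Sum>k\<in>I. of_bool (P k) * c) = of_nat (card {k \<in> I. P k}) * (c :: 'a :: comm_semiring_1)"
  by (simp add: sum_distrib_right[symmetric] sum_of_bool_eq Int_def)

lemma card_triples_eq_count_triples:
  "card {j. j + 2 < length t \<and> P (t ! j) (t ! (j + 1)) (t ! (j + 2))} = count_triples P t"
proof (induction P t rule: count_triples.induct)
  case (1 P a b c r)
  then show ?case
    by (simp add: card_less_Suc_split)
qed auto

lemma count_triples_append:
  "count_triples P (xs @ a # b # ys) = count_triples P (xs @ [a, b]) + count_triples P (a # b # ys)"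
proof (induction xs rule: induct_list012)
  case (3 x y zs)
  then show ?case by (cases zs) auto
qed auto

lemma count_triples_insert:
  "count_triples P (xs @ [a, b, x, c, d] @ ys) + of_bool (P a b c) + of_bool (P b c d)
   = count_triples P (xs @ [a, b, c, d] @ ys) + of_bool (P a b x) + of_bool (P b x c) + of_bool (P x c d)"
proof -
  have "count_triples P (xs @ [a, b, x, c, d] @ ys)
      = count_triples P (xs @ [a, b]) + count_triples P (a # b # x # c # d # ys)"
    using count_triples_append[of P xs a b "x # c # d # ys"] by simp
  moreover have "count_triples P (xs @ [a, b, c, d] @ ys)
      = count_triples P (xs @ [a, b]) + count_triples P (a # b # c # d # ys)"
    using count_triples_append[of P xs a b "c # d # ys"] by simp
  ultimately show ?thesis
    by simp
qed

section \<open>Local patterns of a permutation\<close>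

lemma sv_0 [simp]: "sv s 0 = 0"
  and sv_Suc: "i < length s \<Longrightarrow> sv s (Suc i) = s ! i"
  and sv_beyond: "length s < j \<Longrightarrow> sv s j = 0"
  by (simp_all add: sv_def)

definition count_pattern :: "(nat \<Rightarrow> nat \<Rightarrow> nat \<Rightarrow> bool) \<Rightarrow> nat list \<Rightarrow> nat" where
  "count_pattern P s = card {j \<in> {1..length s}. P (sv s (j - 1)) (sv s j) (sv s (j + 1))}"

lemma nth_zero_bordered: "j \<le> length s + 1 \<Longrightarrow> (0 # s @ [0]) ! j = sv s j"
  by (cases j) (auto simp: sv_def nth_append)

lemma count_pattern_eq_count_triples: "count_pattern P s = count_triples P (0 # s @ [0])"
proof -
  have "count_pattern P s = card {j. j < length s \<and> P (sv s j) (sv s (j + 1)) (sv s (j + 2))}"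
    unfolding count_pattern_def card_shift_from_1 by simp
  also have "\<dots> = card {j. j + 2 < length (0 # s @ [0])
      \<and> P ((0 # s @ [0]) ! j) ((0 # s @ [0]) ! (j + 1)) ((0 # s @ [0]) ! (j + 2))}"
  proof (intro arg_cong[where f = card] Collect_cong)
    show "j < length s \<and> P (sv s j) (sv s (j + 1)) (sv s (j + 2)) \<longleftrightarrow> j + 2 < length (0 # s @ [0])
      \<and> P ((0 # s @ [0]) ! j) ((0 # s @ [0]) ! (j + 1)) ((0 # s @ [0]) ! (j + 2))" for j
      using nth_zero_bordered[of j s] nth_zero_bordered[of "j + 1" s] nth_zero_bordered[of "j + 2" s]
      by auto
  qed
  also have "\<dots> = count_triples P (0 # s @ [0])"
    by (rule card_triples_eq_count_triples)
  finally show ?thesis .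
qed

lemma count_pattern_eq_card_inner:
  assumes "\<And>a b. \<not> P a b 0"
  shows "count_pattern P s = card {k \<in> {1..length s - 1}. P (sv s (k - 1)) (sv s k) (sv s (k + 1))}"
  unfolding count_pattern_def
proof (intro arg_cong[where f = card] set_eqI iffI)
  fix j
  assume "j \<in> {j \<in> {1..length s}. P (sv s (j - 1)) (sv s j) (sv s (j + 1))}"
  moreover have "j \<noteq> length s"
    using calculation assms sv_beyond[of s "j + 1"] by auto
  ultimately show "j \<in> {k \<in> {1..length s - 1}. P (sv s (k - 1)) (sv s k) (sv s (k + 1))}"
    by auto
qed auto

lemma count_pattern_eq_card_inner_shifted:
  assumes "\<And>b c. \<not> P 0 b c"
  shows "count_pattern P s = card {k \<in> {1..length s - 1}. P (sv s k) (sv s (k + 1)) (sv s (k + 2))}"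
proof -
  have "{j \<in> {1..length s}. P (sv s (j - 1)) (sv s j) (sv s (j + 1))}
      = Suc ` {k \<in> {1..length s - 1}. P (sv s k) (sv s (k + 1)) (sv s (k + 2))}"
  proof (rule set_eqI)
    show "j \<in> {j \<in> {1..length s}. P (sv s (j - 1)) (sv s j) (sv s (j + 1))}
      \<longleftrightarrow> j \<in> Suc ` {k \<in> {1..length s - 1}. P (sv s k) (sv s (k + 1)) (sv s (k + 2))}" for j
      using assms by (cases j; cases "j - 1") (auto simp: image_iff)
  qed
  then show ?thesis
    unfolding count_pattern_def by (simp add: card_image)
qed

definition peak :: "nat \<Rightarrow> nat \<Rightarrow> nat \<Rightarrow> bool" where
  "peak a b c \<longleftrightarrow> a < b \<and> c < b"

definition valley :: "nat \<Rightarrow> nat \<Rightarrow> nat \<Rightarrow> bool" where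
  "valley a b c \<longleftrightarrow> b < a \<and> b < c"

definition double_descent :: "nat \<Rightarrow> nat \<Rightarrow> nat \<Rightarrow> bool" where
  "double_descent a b c \<longleftrightarrow> b < a \<and> c < b"

definition double_ascent :: "nat \<Rightarrow> nat \<Rightarrow> nat \<Rightarrow> bool" where
  "double_ascent a b c \<longleftrightarrow> a < b \<and> b < c"

lemma Wst_eq_count_pattern: "Wst s = count_pattern peak s"
  unfolding Wst_def count_pattern_def peak_def by (rule arg_cong[where f = card]) auto

lemma Vst_eq_count_pattern: "Vst s = count_pattern valley s"
  unfolding Vst_def count_pattern_def valley_def
proof (intro arg_cong[where f = card] Collect_cong)
  show "1 < j \<and> j < length s \<and> sv s j < sv s (j - 1) \<and> sv s j < sv s (j + 1) \<longleftrightarrow>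
    j \<in> {1..length s} \<and> sv s j < sv s (j - 1) \<and> sv s j < sv s (j + 1)" for j
    using sv_beyond[of s "j + 1"] by (cases "j = 1"; cases "j = length s") auto
qed

lemma rdd_eq_count_pattern: "rdd s = count_pattern double_descent s"
  unfolding rdd_def count_pattern_def double_descent_def
proof (intro arg_cong[where f = card] Collect_cong)
  show "1 < j \<and> j \<le> length s \<and> sv s j < sv s (j - 1) \<and> sv s (j + 1) < sv s j \<longleftrightarrow>
    j \<in> {1..length s} \<and> sv s j < sv s (j - 1) \<and> sv s (j + 1) < sv s j" for j
    by (cases "j = 1") auto
qed

lemma lda_eq_count_pattern: "lda s = count_pattern double_ascent s"
  unfolding lda_def count_pattern_def double_ascent_def
proof (intro arg_cong[where f = card] Collect_cong)
  show "1 \<le> j \<and> j < length s \<and> sv s (j - 1) < sv s j \<and> sv s j < sv s (j + 1) \<longleftrightarrow>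
    j \<in> {1..length s} \<and> sv s (j - 1) < sv s j \<and> sv s j < sv s (j + 1)" for j
    using sv_beyond[of s "j + 1"] by (cases "j = length s") auto
qed

lemma count_triples_peak_valley_balance:
  "successively (\<noteq>) t \<Longrightarrow> 2 \<le> length t \<Longrightarrow>
    count_triples peak t + of_bool (t ! (length t - 2) < t ! (length t - 1))
    = count_triples valley t + of_bool (t ! 0 < t ! 1)"
proof (induction peak t rule: count_triples.induct)
  case (1 a b c r)
  then have "a \<noteq> b" "b \<noteq> c" "successively (\<noteq>) (b # c # r)"
    by auto
  with "1"(1) show ?case
    by (auto simp: peak_def valley_def)
qed auto

lemma successively_neq_if_distinct: "distinct s \<Longrightarrow> successively (\<noteq>) s"
  by (induction s rule: induct_list012) auto

lemma Wst_eq_Suc_Vst: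
  assumes "distinct s" and "\<forall>z\<in>set s. 0 < z" and "s \<noteq> []"
  shows "Wst s = Suc (Vst s)"
proof -
  have "successively (\<noteq>) (0 # s @ [0])"
    using assms successively_neq_if_distinct[OF assms(1)]
    by (auto simp: successively_append_iff successively_Cons hd_in_set last_in_set)
  moreover have "(0 # s @ [0]) ! (length (0 # s @ [0]) - 1) = 0" "0 < (0 # s @ [0]) ! 1"
    using assms(2,3) by (auto simp: nth_append hd_conv_nth[symmetric] hd_in_set)
  ultimately show ?thesis
    using count_triples_peak_valley_balance[of "0 # s @ [0]"]
    by (simp add: Wst_eq_count_pattern Vst_eq_count_pattern count_pattern_eq_count_triples)
qed

section \<open>Inserting an entry\<close>

definition ins_at :: "nat \<Rightarrow> 'a \<Rightarrow> 'a list \<Rightarrow> 'a list" where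
  "ins_at k x s = take k s @ x # drop k s"

lemma set_ins_at [simp]: "set (ins_at k x s) = insert x (set s)"
proof -
  have "set (take k s) \<union> set (drop k s) = set s"
    by (metis append_take_drop_id set_append)
  then show ?thesis
    by (auto simp: ins_at_def)
qed

lemma distinct_ins_at: "distinct s \<Longrightarrow> x \<notin> set s \<Longrightarrow> distinct (ins_at k x s)"
  by (auto simp: ins_at_def set_take_disj_set_drop_if_distinct dest: in_set_takeD in_set_dropD)

lemma id_take_four_nth_drop:
  assumes "k + 4 \<le> length t"
  shows "t = take k t @ [t ! k, t ! (k + 1), t ! (k + 2), t ! (k + 3)] @ drop (k + 4) t"
proof -
  have "drop j t = t ! j # drop (Suc j) t" if "j < length t" for j
    using that by (simp add: Cons_nth_drop_Suc)
  from this[of k] this[of "k + 1"] this[of "k + 2"] this[of "k + 3"]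
  have "drop k t = [t ! k, t ! (k + 1), t ! (k + 2), t ! (k + 3)] @ drop (k + 4) t"
    using assms by (simp add: numeral_eq_Suc)
  then show ?thesis
    by (metis append_take_drop_id)
qed

text \<open>Two zeros on each side, so that every gap of s lies inside a window of four entries.\<close>

definition pad :: "nat list \<Rightarrow> nat list" where
  "pad s = 0 # 0 # s @ [0, 0]"

lemma nth_pad: "j \<le> length s + 3 \<Longrightarrow> pad s ! j = sv s (j - 1)"
proof (cases j)
  case (Suc i)
  assume "j \<le> length s + 3"
  then show ?thesis using Suc
    by (cases i) (auto simp: pad_def sv_def nth_append nth_Cons')
qed (simp add: pad_def sv_def)

lemma length_pad [simp]: "length (pad s) = length s + 4"
  by (simp add: pad_def)

lemma count_triples_pad:
  assumes "\<And>c. \<not> P 0 0 c" and "\<And>a. \<not> P a 0 0"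
  shows "count_triples P (pad s) = count_triples P (0 # s @ [0])"
proof (cases s rule: rev_cases)
  case (snoc s' a)
  have "count_triples P (pad s) = count_triples P (0 # s @ [0, 0])"
    using assms(1) by (cases s) (simp_all add: pad_def)
  also have "\<dots> = count_triples P (0 # s @ [0])"
    using count_triples_append[of P "0 # s'" a 0 "[0]"] count_triples_append[of P "0 # s'" a 0 "[]"]
      assms(2) snoc by simp
  finally show ?thesis .
qed (simp add: pad_def assms)

lemma count_pattern_ins_at:
  assumes "\<And>c. \<not> P 0 0 c" and "\<And>a. \<not> P a 0 0" and "k \<le> length s"
  shows "count_pattern P (ins_at k x s)
      + of_bool (P (sv s (k - 1)) (sv s k) (sv s (k + 1)))
      + of_bool (P (sv s k) (sv s (k + 1)) (sv s (k + 2)))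
    = count_pattern P s
      + of_bool (P (sv s (k - 1)) (sv s k) x)
      + of_bool (P (sv s k) x (sv s (k + 1)))
      + of_bool (P x (sv s (k + 1)) (sv s (k + 2)))"
proof -
  define L where "L = take k (pad s)"
  define R where "R = drop (k + 4) (pad s)"
  have pad_s: "pad s = L @ [sv s (k - 1), sv s k, sv s (k + 1), sv s (k + 2)] @ R"
    using id_take_four_nth_drop[of k "pad s"] assms(3) unfolding L_def R_def by (simp add: nth_pad)
  have "length L = k"
    using assms(3) unfolding L_def by simp
  then have pad_ins: "pad (ins_at k x s) = L @ [sv s (k - 1), sv s k, x, sv s (k + 1), sv s (k + 2)] @ R"
    using arg_cong[OF pad_s, of "\<lambda>t. take (k + 2) t @ x # drop (k + 2) t"] assms(3)
    by (simp add: pad_def ins_at_def)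
  have "count_triples P (pad (ins_at k x s))
      + of_bool (P (sv s (k - 1)) (sv s k) (sv s (k + 1)))
      + of_bool (P (sv s k) (sv s (k + 1)) (sv s (k + 2)))
    = count_triples P (pad s)
      + of_bool (P (sv s (k - 1)) (sv s k) x)
      + of_bool (P (sv s k) x (sv s (k + 1)))
      + of_bool (P x (sv s (k + 1)) (sv s (k + 2)))"
    unfolding pad_ins pad_s by (rule count_triples_insert)
  then show ?thesis
    unfolding count_pattern_eq_count_triples count_triples_pad[where P = P, OF assms(1,2), symmetric] .
qed

lemma pattern_stats_ins_at:
  assumes "k \<le> length s"
  defines "l \<equiv> sv s (k - 1)" and "p \<equiv> sv s k" and "q \<equiv> sv s (k + 1)" and "r \<equiv> sv s (k + 2)"
  shows "Vst (ins_at k x s) + of_bool (valley l p q) + of_bool (valley p q r)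
      = Vst s + of_bool (valley l p x) + of_bool (valley p x q) + of_bool (valley x q r)"
    and "rdd (ins_at k x s) + of_bool (double_descent l p q) + of_bool (double_descent p q r)
      = rdd s + of_bool (double_descent l p x) + of_bool (double_descent p x q)
        + of_bool (double_descent x q r)"
    and "lda (ins_at k x s) + of_bool (double_ascent l p q) + of_bool (double_ascent p q r)
      = lda s + of_bool (double_ascent l p x) + of_bool (double_ascent p x q)
        + of_bool (double_ascent x q r)"
  unfolding Vst_eq_count_pattern rdd_eq_count_pattern lda_eq_count_pattern l_def p_def q_def r_def
  by (rule count_pattern_ins_at; simp add: assms valley_def double_descent_def double_ascent_def)+

section \<open>Left-to-right and right-to-left maxima\<close>

fun lr_maxima_above :: "nat \<Rightarrow> nat list \<Rightarrow> nat" where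
  "lr_maxima_above b [] = 0"
| "lr_maxima_above b (y # ys) = (if b < y then Suc (lr_maxima_above y ys) else lr_maxima_above b ys)"

fun rl_maxima :: "nat list \<Rightarrow> nat" where
  "rl_maxima [] = 0"
| "rl_maxima (y # ys) = of_bool (\<forall>z\<in>set ys. z < y) + rl_maxima ys"

lemma lr_maxima_above_eq_card:
  "lr_maxima_above b s = card {i. i < length s \<and> b < s ! i \<and> (\<forall>j<i. s ! j < s ! i)}"
proof (induction s arbitrary: b)
  case (Cons y ys)
  have "card {i. i < length (y # ys) \<and> b < (y # ys) ! i \<and> (\<forall>j<i. (y # ys) ! j < (y # ys) ! i)}
      = of_bool (b < y) + card {i. i < length ys \<and> max b y < ys ! i \<and> (\<forall>j<i. ys ! j < ys ! i)}"
    by (simp add: card_less_Suc_split All_less_Suc2 conj_ac)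
  with Cons.IH show ?case
    by (simp add: max_def)
qed simp

lemma rl_maxima_eq_card:
  "rl_maxima s = card {i. i < length s \<and> (\<forall>j. i < j \<and> j < length s \<longrightarrow> s ! j < s ! i)}"
proof (induction s)
  case (Cons y ys)
  have head: "(\<forall>j. 0 < j \<and> j < Suc (length ys) \<longrightarrow> (y # ys) ! j < y) \<longleftrightarrow> (\<forall>z\<in>set ys. z < y)"
    by (auto simp: all_set_conv_all_nth nth_Cons split: nat.split)
  have tail: "(\<forall>j. Suc i < j \<and> j < Suc (length ys) \<longrightarrow> (y # ys) ! j < ys ! i)
      \<longleftrightarrow> (\<forall>j. i < j \<and> j < length ys \<longrightarrow> ys ! j < ys ! i)" for i
    by (auto simp: nth_Cons split: nat.split)
  have "card {i. i < Suc (length ys) \<and> (\<forall>j. i < j \<and> j < Suc (length ys) \<longrightarrow> (y # ys) ! j < (y # ys) ! i)}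
      = of_bool (\<forall>z\<in>set ys. z < y) + card {i. i < length ys \<and> (\<forall>j. i < j \<and> j < length ys \<longrightarrow> ys ! j < ys ! i)}"
    by (simp only: length_Cons card_less_Suc_split nth_Cons_0 nth_Cons_Suc head tail)
  with Cons.IH show ?case
    by simp
qed simp

lemma LRmax_eq_lr_maxima_above:
  assumes "\<forall>z\<in>set s. 0 < z"
  shows "LRmax s = lr_maxima_above 0 s"
proof -
  have "(\<forall>j. 1 \<le> j \<and> j < Suc i \<longrightarrow> sv s j < sv s (Suc i)) \<longleftrightarrow> (\<forall>j<i. s ! j < s ! i)"
    if i: "i < length s" for i
  proof (intro iffI allI impI)
    fix j
    assume "\<forall>j. 1 \<le> j \<and> j < Suc i \<longrightarrow> sv s j < sv s (Suc i)" and "j < i"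
    then show "s ! j < s ! i"
      using i by (auto simp: sv_Suc dest: spec[of _ "Suc j"])
  next
    fix j
    assume "\<forall>j<i. s ! j < s ! i" and "1 \<le> j \<and> j < Suc i"
    then show "sv s j < sv s (Suc i)"
      using i by (cases j) (auto simp: sv_Suc)
  qed
  moreover have "0 < s ! i" if "i < length s" for i
    using that assms by simp
  ultimately show ?thesis
    unfolding LRmax_def lr_maxima_above_eq_card card_shift_from_1
    by (intro arg_cong[where f = card]) auto
qed

lemma RLmax_eq_rl_maxima: "RLmax s = rl_maxima s"
proof -
  have "(\<forall>j. Suc i < j \<and> j \<le> length s \<longrightarrow> sv s j < sv s (Suc i))
      \<longleftrightarrow> (\<forall>j. i < j \<and> j < length s \<longrightarrow> s ! j < s ! i)"
    if i: "i < length s" for i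
  proof (intro iffI allI impI)
    fix j
    assume "\<forall>j. Suc i < j \<and> j \<le> length s \<longrightarrow> sv s j < sv s (Suc i)" and "i < j \<and> j < length s"
    then show "s ! j < s ! i"
      using i by (auto simp: sv_Suc dest: spec[of _ "Suc j"])
  next
    fix j
    assume "\<forall>j. i < j \<and> j < length s \<longrightarrow> s ! j < s ! i" and "Suc i < j \<and> j \<le> length s"
    then show "sv s j < sv s (Suc i)"
      using i by (cases j) (auto simp: sv_Suc)
  qed
  then show ?thesis
    unfolding RLmax_def rl_maxima_eq_card card_shift_from_1
    by (intro arg_cong[where f = card]) auto
qed

lemma LRmax_pos: "s \<noteq> [] \<Longrightarrow> \<forall>z\<in>set s. 0 < z \<Longrightarrow> 0 < LRmax s"
  by (cases s) (auto simp: LRmax_eq_lr_maxima_above)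

lemma RLmax_pos: "s \<noteq> [] \<Longrightarrow> 0 < RLmax s"
  unfolding RLmax_eq_rl_maxima by (induction s rule: induct_list012) auto

lemma lr_maxima_above_eq_if_below_all:
  "\<forall>z\<in>set s. b < z \<Longrightarrow> \<forall>z\<in>set s. b' < z \<Longrightarrow> lr_maxima_above b s = lr_maxima_above b' s"
  by (cases s) auto

lemma lr_maxima_above_insert_dominated:
  "x \<le> b \<or> (\<exists>z\<in>set xs. x \<le> z) \<Longrightarrow> lr_maxima_above b (xs @ x # ys) = lr_maxima_above b (xs @ ys)"
  by (induction xs arbitrary: b) auto

lemma rl_maxima_insert_min:
  "\<forall>z\<in>set (xs @ ys). x < z \<Longrightarrow> rl_maxima (xs @ x # ys) = rl_maxima (xs @ ys) + of_bool (ys = [])"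
proof (induction xs)
  case Nil
  then show ?case by (cases ys) auto
qed auto

lemma LRmax_ins_at:
  assumes "\<forall>z\<in>set s. x < z" and "0 < x" and "k \<le> length s"
  shows "LRmax (ins_at k x s) = LRmax s + of_bool (k = 0)"
proof -
  have pos: "\<forall>z\<in>set s. 0 < z" "\<forall>z\<in>set (ins_at k x s). 0 < z"
    using assms by auto
  show ?thesis
  proof (cases "k = 0")
    case True
    then have "lr_maxima_above 0 (ins_at k x s) = Suc (lr_maxima_above x s)"
      using assms by (simp add: ins_at_def)
    also have "lr_maxima_above x s = lr_maxima_above 0 s"
      using lr_maxima_above_eq_if_below_all pos assms(1) by blast
    finally show ?thesis
      using True pos by (simp add: LRmax_eq_lr_maxima_above)
  next
    case False
    then obtain y ys k' where "s = y # ys" "k = Suc k'"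
      using assms(3) by (cases s; cases k) auto
    then have "lr_maxima_above 0 (ins_at k x s) = lr_maxima_above 0 s"
      using assms(1) lr_maxima_above_insert_dominated[of x 0 "take k s" "drop k s"]
      by (simp add: ins_at_def less_imp_le)
    then show ?thesis
      using False pos by (simp add: LRmax_eq_lr_maxima_above)
  qed
qed

lemma RLmax_ins_at:
  assumes "\<forall>z\<in>set s. x < z" and "k \<le> length s"
  shows "RLmax (ins_at k x s) = RLmax s + of_bool (k = length s)"
  using rl_maxima_insert_min[of "take k s" "drop k s" x] assms
  by (simp add: RLmax_eq_rl_maxima ins_at_def)

section \<open>Weights and insertion of a new minimum\<close>

text \<open>u1 and u2 share the exponent because W = V + 1 on permutations.\<close>

definition pmon :: "nat \<Rightarrow> nat \<Rightarrow> nat \<Rightarrow> nat \<Rightarrow> nat \<Rightarrow> poly" where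
  "pmon a b v r l = Var Alpha ^ a * Var Beta ^ b * Var U1 ^ v * Var U2 ^ v * Var U3 ^ r * Var U4 ^ l"

lemma pmon_Suc_Alpha_U4: "pmon (Suc a) b v r (Suc l) = Var Alpha * Var U4 * pmon a b v r l"
  and pmon_Suc_Beta_U3: "pmon a (Suc b) v (Suc r) l = Var Beta * Var U3 * pmon a b v r l"
  by (simp_all add: pmon_def mult_ac)

definition weight :: "nat list \<Rightarrow> poly" where
  "weight s = pmon (LRmax s - 1) (RLmax s - 1) (Vst s) (rdd s) (lda s)"

text \<open>The terms come from D a, D b, D u4, D u1, D u3 and D u2, in this order.\<close>

definition pmon_derivative :: "nat \<Rightarrow> nat \<Rightarrow> nat \<Rightarrow> nat \<Rightarrow> nat \<Rightarrow> poly" where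
  "pmon_derivative a b v r l =
     Var Alpha * Var U4 * pmon a b v r l + Var Beta * Var U3 * pmon a b v r l
     + of_nat l * pmon a b (v + 1) r (l - 1) + of_nat v * pmon a b v (r + 1) l
     + of_nat r * pmon a b (v + 1) (r - 1) l + of_nat v * pmon a b v r (l + 1)"
locale min_insertion =
  fixes s :: "nat list" and x :: nat
  assumes distinct: "distinct s" and pos: "0 < x" and below: "\<forall>z\<in>set s. x < z"
    and nonempty: "s \<noteq> []"
begin

lemma entries_pos: "\<forall>z\<in>set s. 0 < z"
  using below pos by fastforce

lemma sv_gt: "1 \<le> j \<Longrightarrow> j \<le> length s \<Longrightarrow> x < sv s j"
  using below by (auto simp: sv_def)

lemma sv_neq_Suc: "j \<le> length s \<Longrightarrow> sv s j \<noteq> sv s (j + 1)"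
proof (cases "j = 0 \<or> j = length s")
  case True
  assume "j \<le> length s"
  then show ?thesis
    using True sv_gt[of 1] sv_gt[of j] sv_beyond[of s "j + 1"] pos nonempty
    by (cases s) auto
next
  case False
  assume "j \<le> length s"
  with False distinct show ?thesis
    by (auto simp: sv_def nth_eq_iff_index_eq)
qed

lemma weight_ins_at_0: "weight (ins_at 0 x s) = Var Alpha * Var U4 * weight s"
proof -
  have "x < sv s 1"
    using sv_gt[of 1] nonempty by (cases s) auto
  then have "Vst (ins_at 0 x s) = Vst s" "rdd (ins_at 0 x s) = rdd s" "lda (ins_at 0 x s) = Suc (lda s)"
    using pattern_stats_ins_at[of 0 s x] pos
    by (auto simp: valley_def double_descent_def double_ascent_def)
  moreover have "LRmax (ins_at 0 x s) = Suc (LRmax s)" "RLmax (ins_at 0 x s) = RLmax s"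
    using LRmax_ins_at[of s x 0] RLmax_ins_at[of s x 0] below pos nonempty by auto
  moreover have "0 < LRmax s"
    using LRmax_pos[OF nonempty entries_pos] .
  ultimately show ?thesis
    using pmon_Suc_Alpha_U4[of "LRmax s - 1"] by (simp add: weight_def)
qed

lemma weight_ins_at_end: "weight (ins_at (length s) x s) = Var Beta * Var U3 * weight s"
proof -
  have "x < sv s (length s)"
    using sv_gt[of "length s"] nonempty by (cases s) auto
  moreover have "sv s (length s - 1) \<noteq> sv s (length s)"
    using sv_neq_Suc[of "length s - 1"] nonempty by (cases s) auto
  ultimately have "Vst (ins_at (length s) x s) = Vst s" "rdd (ins_at (length s) x s) = Suc (rdd s)"
      "lda (ins_at (length s) x s) = lda s"
    using pattern_stats_ins_at[of "length s" s x] pos sv_beyond[of s "length s + 1"]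
      sv_beyond[of s "length s + 2"]
    by (auto simp: valley_def double_descent_def double_ascent_def)
  moreover have "LRmax (ins_at (length s) x s) = LRmax s" "RLmax (ins_at (length s) x s) = Suc (RLmax s)"
    using LRmax_ins_at[of s x "length s"] RLmax_ins_at[of s x "length s"] below pos nonempty by auto
  moreover have "0 < RLmax s"
    using RLmax_pos[OF nonempty] .
  ultimately show ?thesis
    using pmon_Suc_Beta_U3[of _ "RLmax s - 1"] by (simp add: weight_def)
qed

lemma weight_ins_at_inner:
  assumes "1 \<le> k" and "k < length s"
  defines "l \<equiv> sv s (k - 1)" and "p \<equiv> sv s k" and "q \<equiv> sv s (k + 1)" and "r \<equiv> sv s (k + 2)"
  shows "weight (ins_at k x s) =
      of_bool (double_ascent l p q) * pmon (LRmax s - 1) (RLmax s - 1) (Vst s + 1) (rdd s) (lda s - 1)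
    + of_bool (valley l p q) * pmon (LRmax s - 1) (RLmax s - 1) (Vst s) (rdd s + 1) (lda s)
    + of_bool (double_descent p q r) * pmon (LRmax s - 1) (RLmax s - 1) (Vst s + 1) (rdd s - 1) (lda s)
    + of_bool (valley p q r) * pmon (LRmax s - 1) (RLmax s - 1) (Vst s) (rdd s) (lda s + 1)"
proof -
  have maxima: "LRmax (ins_at k x s) = LRmax s" "RLmax (ins_at k x s) = RLmax s"
    using LRmax_ins_at[of s x k] RLmax_ins_at[of s x k] assms(1,2) below pos by auto
  have "x < p" "x < q"
    using sv_gt[of k] sv_gt[of "k + 1"] assms(1,2) unfolding p_def q_def by auto
  note stats = pattern_stats_ins_at[of k s x, folded l_def p_def q_def r_def]
  have "l \<noteq> p" "p \<noteq> q" "q \<noteq> r"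
    using sv_neq_Suc[of "k - 1"] sv_neq_Suc[of k] sv_neq_Suc[of "k + 1"] assms(1,2)
    unfolding l_def p_def q_def r_def by auto
  then consider "l < p" "p < q" | "p < l" "p < q" | "q < p" "r < q" | "q < p" "q < r"
    by linarith
  then show ?thesis
  proof cases
    case 1
    with stats \<open>x < p\<close> \<open>x < q\<close> assms(2) have "Vst (ins_at k x s) = Vst s + 1"
        "rdd (ins_at k x s) = rdd s" "lda (ins_at k x s) = lda s - 1"
      by (auto simp: valley_def double_descent_def double_ascent_def)
    with 1 show ?thesis
      by (simp add: weight_def maxima valley_def double_descent_def double_ascent_def)
  next
    case 2
    with stats \<open>x < p\<close> \<open>x < q\<close> assms(2) have "Vst (ins_at k x s) = Vst s"
        "rdd (ins_at k x s) = rdd s + 1" "lda (ins_at k x s) = lda s"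
      by (auto simp: valley_def double_descent_def double_ascent_def)
    with 2 show ?thesis
      by (simp add: weight_def maxima valley_def double_descent_def double_ascent_def)
  next
    case 3
    with stats \<open>x < p\<close> \<open>x < q\<close> assms(2) have "Vst (ins_at k x s) = Vst s + 1"
        "rdd (ins_at k x s) = rdd s - 1" "lda (ins_at k x s) = lda s"
      by (auto simp: valley_def double_descent_def double_ascent_def)
    with 3 show ?thesis
      by (simp add: weight_def maxima valley_def double_descent_def double_ascent_def)
  next
    case 4
    with stats \<open>x < p\<close> \<open>x < q\<close> assms(2) have "Vst (ins_at k x s) = Vst s"
        "rdd (ins_at k x s) = rdd s" "lda (ins_at k x s) = lda s + 1"
      by (auto simp: valley_def double_descent_def double_ascent_def)
    with 4 show ?thesis
      by (simp add: weight_def maxima valley_def double_descent_def double_ascent_def)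
  qed
qed

lemma sum_weight_ins_at:
  "(\<Sum>k\<le>length s. weight (ins_at k x s))
    = pmon_derivative (LRmax s - 1) (RLmax s - 1) (Vst s) (rdd s) (lda s)"
proof -
  define m where "m = length s - 1"
  have len: "length s = Suc m"
    using nonempty unfolding m_def by (cases s) auto
  let ?pm = "pmon (LRmax s - 1) (RLmax s - 1)"
  let ?at = "\<lambda>P k. P (sv s (k - 1)) (sv s k) (sv s (k + 1))"
  let ?after = "\<lambda>P k. P (sv s k) (sv s (k + 1)) (sv s (k + 2))"
  have cards: "card {k \<in> {1..m}. ?at double_ascent k} = lda s" "card {k \<in> {1..m}. ?at valley k} = Vst s"
    "card {k \<in> {1..m}. ?after double_descent k} = rdd s" "card {k \<in> {1..m}. ?after valley k} = Vst s"
    unfolding m_def lda_eq_count_pattern Vst_eq_count_pattern rdd_eq_count_pattern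
    by (rule count_pattern_eq_card_inner[symmetric] count_pattern_eq_card_inner_shifted[symmetric];
        simp add: valley_def double_descent_def double_ascent_def)+
  have "(\<Sum>k\<in>{1..m}. weight (ins_at k x s)) = (\<Sum>k\<in>{1..m}.
        of_bool (?at double_ascent k) * ?pm (Vst s + 1) (rdd s) (lda s - 1)
      + of_bool (?at valley k) * ?pm (Vst s) (rdd s + 1) (lda s)
      + of_bool (?after double_descent k) * ?pm (Vst s + 1) (rdd s - 1) (lda s)
      + of_bool (?after valley k) * ?pm (Vst s) (rdd s) (lda s + 1))"
    by (rule sum.cong) (auto simp: len weight_ins_at_inner)
  then have inner: "(\<Sum>k\<in>{1..m}. weight (ins_at k x s)) = of_nat (lda s) * ?pm (Vst s + 1) (rdd s) (lda s - 1)
      + of_nat (Vst s) * ?pm (Vst s) (rdd s + 1) (lda s)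
      + of_nat (rdd s) * ?pm (Vst s + 1) (rdd s - 1) (lda s)
      + of_nat (Vst s) * ?pm (Vst s) (rdd s) (lda s + 1)"
    unfolding sum.distrib sum_of_bool_mult[OF finite_atLeastAtMost] cards .
  have "(\<Sum>k\<le>length s. weight (ins_at k x s))
      = weight (ins_at 0 x s) + (\<Sum>k\<in>{1..m}. weight (ins_at k x s)) + weight (ins_at (length s) x s)"
    unfolding len by (simp add: atMost_atLeast0 sum.atLeast0_atMost_Suc sum.atLeast_Suc_atMost)
  then show ?thesis
    unfolding inner weight_ins_at_0 weight_ins_at_end
    by (simp add: pmon_derivative_def weight_def algebra_simps)
qed

end

section \<open>Permutations built by insertion\<close>

lemma takeWhile_ins_at: "x \<notin> set s \<Longrightarrow> takeWhile (\<lambda>y. y \<noteq> x) (ins_at k x s) = take k s"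
  unfolding ins_at_def by (subst takeWhile_append2) (auto dest: in_set_takeD)

lemma drop_Suc_ins_at: "k \<le> length s \<Longrightarrow> drop (Suc k) (ins_at k x s) = drop k s"
  by (simp add: ins_at_def)

lemma ins_at_inject:
  assumes "x \<notin> set s" and "x \<notin> set s'" and "k \<le> length s" and "k' \<le> length s'"
    and "ins_at k x s = ins_at k' x s'"
  shows "s = s' \<and> k = k'"
proof -
  have "take k s = take k' s'"
    using takeWhile_ins_at[OF assms(1), of k] takeWhile_ins_at[OF assms(2), of k'] assms(5) by simp
  moreover from this have "k = k'"
    using assms(3,4) by (metis length_take min.absorb2)
  moreover have "drop k s = drop k' s'"
    using drop_Suc_ins_at[OF assms(3), of x] drop_Suc_ins_at[OF assms(4), of x] assms(5) calculation(2)
    by simp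
  ultimately show ?thesis
    by (metis append_take_drop_id)
qed

lemma permutations_of_set_insert:
  assumes "finite S" and "x \<notin> S"
  shows "permutations_of_set (insert x S) = (\<lambda>(s, k). ins_at k x s) ` (permutations_of_set S \<times> {..card S})"
proof (intro set_eqI iffI)
  fix t
  assume t: "t \<in> permutations_of_set (insert x S)"
  then obtain xs ys where xs_ys: "t = xs @ x # ys"
    by (metis insertI1 permutations_of_setD(1) split_list)
  then have s: "xs @ ys \<in> permutations_of_set S"
    using t assms(2) by (auto simp: permutations_of_set_def)
  then have "length xs \<le> card S"
    using distinct_card[of "xs @ ys"] by (auto simp: permutations_of_set_def)
  moreover have "t = ins_at (length xs) x (xs @ ys)"
    using xs_ys by (simp add: ins_at_def)
  ultimately show "t \<in> (\<lambda>(s, k). ins_at k x s) ` (permutations_of_set S \<times> {..card S})"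
    using s by force
next
  fix t
  assume "t \<in> (\<lambda>(s, k). ins_at k x s) ` (permutations_of_set S \<times> {..card S})"
  then obtain s k where "t = ins_at k x s" and "s \<in> permutations_of_set S"
    by auto
  then show "t \<in> permutations_of_set (insert x S)"
    using assms(2) by (auto simp: permutations_of_set_def distinct_ins_at)
qed

lemma inj_on_ins_at:
  assumes "finite S" and "x \<notin> S"
  shows "inj_on (\<lambda>(s, k). ins_at k x s) (permutations_of_set S \<times> {..card S})"
proof (rule inj_onI)
  fix p q
  assume "p \<in> permutations_of_set S \<times> {..card S}" and "q \<in> permutations_of_set S \<times> {..card S}"
    and "(\<lambda>(s, k). ins_at k x s) p = (\<lambda>(s, k). ins_at k x s) q"
  moreover obtain s k s' k' where "p = (s, k)" and "q = (s', k')"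
    by fastforce
  ultimately show "p = q"
    using ins_at_inject[of x s s' k k'] assms(2)
    by (auto simp: permutations_of_set_def distinct_card[symmetric])
qed

lemma sum_permutations_of_set_insert:
  assumes "finite S" and "x \<notin> S"
  shows "(\<Sum>t\<in>permutations_of_set (insert x S). f t)
    = (\<Sum>s\<in>permutations_of_set S. \<Sum>k\<le>length s. f (ins_at k x s))"
proof -
  have "(\<Sum>t\<in>permutations_of_set (insert x S). f t)
      = (\<Sum>(s, k)\<in>permutations_of_set S \<times> {..card S}. f (ins_at k x s))"
    unfolding permutations_of_set_insert[OF assms]
    by (subst sum.reindex[OF inj_on_ins_at[OF assms]]) (simp add: case_prod_unfold)
  also have "\<dots> = (\<Sum>s\<in>permutations_of_set S. \<Sum>k\<le>card S. f (ins_at k x s))"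
    by (rule sum.cartesian_product[symmetric])
  also have "\<dots> = (\<Sum>s\<in>permutations_of_set S. \<Sum>k\<le>length s. f (ins_at k x s))"
    by (rule sum.cong) (auto simp: permutations_of_set_def distinct_card[symmetric])
  finally show ?thesis .
qed

section \<open>Iterating the derivation\<close>

locale ab_derivation =
  fixes D :: "poly \<Rightarrow> poly"
  assumes add: "\<And>f g. D (f + g) = D f + D g"
    and lin_alpha: "\<And>f. D (Var Alpha * f) = Var Alpha * D f"
    and lin_beta: "\<And>f. D (Var Beta * f) = Var Beta * D f"
    and leibniz: "\<And>f g. D (f * g) = D f * g + f * D g"
    and Da: "D (Var A) = Var Alpha * Var A * Var U4"
    and Db: "D (Var B) = Var Beta * Var B * Var U3"
    and Du4: "D (Var U4) = Var U1 * Var U2"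
    and Du3: "D (Var U3) = Var U1 * Var U2"
    and Du1: "D (Var U1) = Var U1 * Var U3"
    and Du2: "D (Var U2) = Var U2 * Var U4"
begin

lemma D_0: "D 0 = 0"
  using add[of 0 0] by simp

lemma D_sum: "D (\<Sum>i\<in>I. f i) = (\<Sum>i\<in>I. D (f i))"
  by (induction I rule: infinite_finite_induct) (auto simp: D_0 add)

lemma D_power: "D (f ^ n) = of_nat n * f ^ (n - 1) * D f"
proof (induction n)
  case 0
  show ?case
    using leibniz[of 1 1] by simp
next
  case (Suc n)
  then show ?case
    by (cases n) (simp_all add: leibniz algebra_simps)
qed

lemma D_power_eigen:
  assumes "D f = f * g"
  shows "D (f ^ n) = of_nat n * f ^ n * g"
  using D_power[of f n] assms by (cases n) (simp_all add: algebra_simps)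

lemma D_Alpha_power_mult: "D (Var Alpha ^ n * f) = Var Alpha ^ n * D f"
  by (induction n) (auto simp: lin_alpha mult.assoc)

lemma D_Beta_power_mult: "D (Var Beta ^ n * f) = Var Beta ^ n * D f"
  by (induction n) (auto simp: lin_beta mult.assoc)

lemma D_ab_pmon: "D (Var A * Var B * pmon a b v r l) = Var A * Var B * pmon_derivative a b v r l"
proof -
  have split: "Var A * Var B * pmon a b v r l
      = Var Alpha ^ a * (Var Beta ^ b * (Var A * Var B * Var U1 ^ v * Var U2 ^ v * Var U3 ^ r * Var U4 ^ l))"
    by (simp add: pmon_def mult_ac)
  have D_rest: "D (Var A * Var B * Var U1 ^ v * Var U2 ^ v * Var U3 ^ r * Var U4 ^ l)
     = Var A * Var B * (Var Alpha * Var U4 * (Var U1 ^ v * Var U2 ^ v * Var U3 ^ r * Var U4 ^ l)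
       + Var Beta * Var U3 * (Var U1 ^ v * Var U2 ^ v * Var U3 ^ r * Var U4 ^ l)
       + of_nat v * Var U1 ^ v * Var U3 * Var U2 ^ v * Var U3 ^ r * Var U4 ^ l
       + of_nat v * Var U1 ^ v * Var U2 ^ v * Var U4 * Var U3 ^ r * Var U4 ^ l
       + of_nat r * Var U1 ^ v * Var U2 ^ v * Var U3 ^ (r - 1) * (Var U1 * Var U2) * Var U4 ^ l
       + of_nat l * Var U1 ^ v * Var U2 ^ v * Var U3 ^ r * Var U4 ^ (l - 1) * (Var U1 * Var U2))"
    by (simp add: leibniz Da Db D_power_eigen[OF Du1] D_power_eigen[OF Du2] D_power[of "Var U3"]
        D_power[of "Var U4"] Du3 Du4 algebra_simps)
  show ?thesis
    unfolding split D_Alpha_power_mult D_Beta_power_mult D_rest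
    by (simp add: pmon_derivative_def pmon_def algebra_simps)
qed

text \<open>Removing the smallest entry does not leave a permutation of an initial segment,
  so the induction runs over permutations of arbitrary finite sets of positive integers.\<close>

lemma funpow_D_ab:
  assumes "finite S" and "0 \<notin> S" and "card S = Suc n"
  shows "(D ^^ n) (Var A * Var B) = Var A * Var B * (\<Sum>s\<in>permutations_of_set S. weight s)"
  using assms
proof (induction n arbitrary: S)
  case 0
  then obtain y where S: "S = {y}" and "0 < y"
    by (auto simp: card_Suc_eq)
  then have "weight [y] = 1"
    by (simp add: weight_def pmon_def LRmax_eq_lr_maxima_above RLmax_eq_rl_maxima
        Vst_eq_count_pattern rdd_eq_count_pattern lda_eq_count_pattern count_pattern_eq_count_triples
        valley_def double_descent_def double_ascent_def)
  then show ?case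
    using S by simp
next
  case (Suc n)
  define x where "x = Min S"
  define S' where "S' = S - {x}"
  have "x \<in> S"
    using Suc.prems Min_in unfolding x_def by fastforce
  then have S: "S = insert x S'" and "x \<notin> S'" and "finite S'" and "card S' = Suc n"
    using Suc.prems unfolding S'_def by auto
  have x_min: "\<forall>z\<in>S'. x < z"
    using Suc.prems(1) unfolding S'_def x_def by (auto intro: Min_le le_neq_implies_less)
  have "0 < x"
    using \<open>x \<in> S\<close> Suc.prems(2) by (cases x) auto
  have D_weight: "D (Var A * Var B * weight s) = Var A * Var B * (\<Sum>k\<le>length s. weight (ins_at k x s))"
    if "s \<in> permutations_of_set S'" for s
  proof -
    interpret min_insertion s x
      using that x_min \<open>0 < x\<close> \<open>card S' = Suc n\<close>
      by unfold_locales (auto simp: permutations_of_set_def)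
    show ?thesis
      using D_ab_pmon[of "LRmax s - 1" "RLmax s - 1" "Vst s" "rdd s" "lda s"]
      unfolding sum_weight_ins_at weight_def[of s] .
  qed
  have "(D ^^ Suc n) (Var A * Var B) = D (Var A * Var B * (\<Sum>s\<in>permutations_of_set S'. weight s))"
    using Suc.IH[OF \<open>finite S'\<close> _ \<open>card S' = Suc n\<close>] Suc.prems(2) unfolding S by simp
  also have "\<dots> = (\<Sum>s\<in>permutations_of_set S'. Var A * Var B * (\<Sum>k\<le>length s. weight (ins_at k x s)))"
    by (simp add: sum_distrib_left D_sum D_weight)
  also have "\<dots> = Var A * Var B * (\<Sum>t\<in>permutations_of_set S. weight t)"
    unfolding S sum_permutations_of_set_insert[OF \<open>finite S'\<close> \<open>x \<notin> S'\<close>] sum_distrib_left ..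
  finally show ?case .
qed

end

theorem theorem3p1:
  fixes D :: "poly \<Rightarrow> poly" and n :: nat
  assumes add: "\<And>f g. D (f + g) = D f + D g"
    and lin_Q: "\<And>c f. D (Const c * f) = Const c * D f"
    and lin_alpha: "\<And>f. D (Var Alpha * f) = Var Alpha * D f"
    and lin_beta: "\<And>f. D (Var Beta * f) = Var Beta * D f"
    and leibniz: "\<And>f g. D (f * g) = D f * g + f * D g"
    and Da: "D (Var A) = Var Alpha * Var A * Var U4"
    and Db: "D (Var B) = Var Beta * Var B * Var U3"
    and Du4: "D (Var U4) = Var U1 * Var U2"
    and Du3: "D (Var U3) = Var U1 * Var U2"
    and Du1: "D (Var U1) = Var U1 * Var U3"
    and Du2: "D (Var U2) = Var U2 * Var U4"
  shows "(D ^^ n) (Var A * Var B) = Var A * Var B * Pn n"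
proof -
  interpret ab_derivation D
    by unfold_locales (fact add lin_alpha lin_beta leibniz Da Db Du4 Du3 Du1 Du2)+
  have "Pn n = (\<Sum>s\<in>permutations_of_set {1..n+1}. weight s)"
    unfolding Pn_def
  proof (rule sum.cong[OF refl])
    fix s
    assume "s \<in> permutations_of_set {1..n+1}"
    then have "Wst s = Suc (Vst s)"
      by (intro Wst_eq_Suc_Vst) (auto simp: permutations_of_set_def)
    then show "Var U1 ^ Vst s * Var U2 ^ (Wst s - 1) * Var U3 ^ rdd s * Var U4 ^ lda s
        * Var Alpha ^ (LRmax s - 1) * Var Beta ^ (RLmax s - 1) = weight s"
      by (simp add: weight_def pmon_def mult_ac)
  qed
  then show ?thesis
    using funpow_D_ab[of "{1..n+1}" n] by simp
qed

end
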